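(* Let $A\ge0$ and let $c:[a,b]\times S^1\to\mathbb R^2$ be a smooth horizontal path of immersions ($\langle c_t,c_\theta\rangle\equiv0$), and write $c_t=a\,ic_\theta/|c_\theta|$ with $a$ a smooth real function. Then $c$ satisfies the geodesic equation $$\big((1+A\kappa^2)|c_\theta|c_t\big)_t=\Big(\frac{-1+A\kappa^2}{2}\frac{|c_t|^2}{|c_\theta|}c_\theta+A\frac{(\kappa|c_t|^2)_\theta}{|c_\theta|^2}ic_\theta\Big)_\theta$$ if and only if $$\big((1+A\kappa^2)a\big)_t=\frac{1+3A\kappa^2}{2}\,\kappa a^2+A(\kappa a^2)_{ss},$$ where $f_s:=f_\theta/|c_\theta|$ denotes the arclength derivative. Moreover, along any such horizontal path, $|c_\theta|_t=-a\kappa|c_\theta|$.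
   Context: $S^1=\mathbb R/2\pi\mathbb Z$, $\mathbb R^2\cong\mathbb C$. Subscripts $t,\theta$ are partial derivatives. $\kappa=\kappa_{c(t)}=\det(c_\theta,c_{\theta\theta})/|c_\theta|^3$. *)

theory Defs
  imports "HOL-Analysis.Analysis"
begin

text \<open>Functions on [t0,t1] x R (the circle S^1 = R/2piZ is represented by 2pi-periodic
functions in theta). Curves in R^2 are complex-valued.\<close>

definition Dt :: "real \<Rightarrow> real \<Rightarrow> (real \<Rightarrow> real \<Rightarrow> 'b::real_normed_vector) \<Rightarrow> real \<Rightarrow> real \<Rightarrow> 'b" where
  "Dt t0 t1 f t \<theta> = vector_derivative (\<lambda>s. f s \<theta>) (at t within {t0..t1})"

definition Dth :: "(real \<Rightarrow> real \<Rightarrow> 'b::real_normed_vector) \<Rightarrow> real \<Rightarrow> real \<Rightarrow> 'b" where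
  "Dth f t \<theta> = vector_derivative (\<lambda>\<phi>. f t \<phi>) (at \<theta>)"

fun dpart :: "real \<Rightarrow> real \<Rightarrow> bool list \<Rightarrow> (real \<Rightarrow> real \<Rightarrow> 'b::real_normed_vector) \<Rightarrow> real \<Rightarrow> real \<Rightarrow> 'b" where
  "dpart t0 t1 [] f = f"
| "dpart t0 t1 (True # w) f = Dt t0 t1 (dpart t0 t1 w f)"
| "dpart t0 t1 (False # w) f = Dth (dpart t0 t1 w f)"

definition smooth_on_strip :: "real \<Rightarrow> real \<Rightarrow> (real \<Rightarrow> real \<Rightarrow> 'b::real_normed_vector) \<Rightarrow> bool" where
  "smooth_on_strip t0 t1 f \<longleftrightarrow>
     (\<forall>w. continuous_on ({t0..t1} \<times> UNIV) (\<lambda>(t,\<theta>). dpart t0 t1 w f t \<theta>) \<and>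
          (\<forall>t\<in>{t0..t1}. \<forall>\<theta>.
              (\<lambda>s. dpart t0 t1 w f s \<theta>) differentiable (at t within {t0..t1}) \<and>
              (\<lambda>\<phi>. dpart t0 t1 w f t \<phi>) differentiable (at \<theta>)))"

definition periodic_theta :: "(real \<Rightarrow> real \<Rightarrow> 'b) \<Rightarrow> bool" where
  "periodic_theta f \<longleftrightarrow> (\<forall>t \<theta>. f t (\<theta> + 2*pi) = f t \<theta>)"

definition det2 :: "complex \<Rightarrow> complex \<Rightarrow> real" where
  "det2 u v = Re u * Im v - Im u * Re v"

definition curv :: "(real \<Rightarrow> real \<Rightarrow> complex) \<Rightarrow> real \<Rightarrow> real \<Rightarrow> real" where
  "curv c t \<theta> = det2 (Dth c t \<theta>) (Dth (Dth c) t \<theta>) / norm (Dth c t \<theta>) ^ 3"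

definition Ds :: "(real \<Rightarrow> real \<Rightarrow> complex) \<Rightarrow> (real \<Rightarrow> real \<Rightarrow> real) \<Rightarrow> real \<Rightarrow> real \<Rightarrow> real" where
  "Ds c f t \<theta> = Dth f t \<theta> / norm (Dth c t \<theta>)"

end

theory Submission
  imports Defs
begin

text \<open>Work in the moving frame of the unit tangent \<open>T = sgn c\<^sub>\<theta> = c\<^sub>\<theta>/|c\<^sub>\<theta>|\<close> and the
normal \<open>iT\<close>. The Frenet equation \<open>T\<^sub>\<theta> = i\<kappa>|c\<^sub>\<theta>|T\<close>, the representation \<open>c\<^sub>t = iaT\<close> and the
symmetry of mixed partials \<open>c\<^sub>\<theta>\<^sub>t = c\<^sub>t\<^sub>\<theta>\<close> give \<open>c\<^sub>\<theta>\<^sub>t = (ia\<^sub>\<theta> - a\<kappa>|c\<^sub>\<theta>|)T\<close>, hence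
\<open>|c\<^sub>\<theta>|\<^sub>t = -a\<kappa>|c\<^sub>\<theta>|\<close>. Both sides of the geodesic equation then take the form \<open>(x + iy)T\<close>; their
tangential components \<open>x = -(1 + A\<kappa>\<^sup>2)aa\<^sub>\<theta>\<close> agree identically, and equality of the normal
components is the scalar equation for \<open>a\<close>.\<close>

section \<open>Partial derivatives on the strip\<close>

lemma dpart_append: "dpart t0 t1 (v @ w) f = dpart t0 t1 v (dpart t0 t1 w f)"
proof (induction v)
  case (Cons b v)
  then show ?case by (cases b) simp_all
qed simp

lemma smooth_on_strip_dpart:
  assumes "smooth_on_strip t0 t1 f"
  shows "smooth_on_strip t0 t1 (dpart t0 t1 v f)"
  using assms unfolding smooth_on_strip_def by (simp flip: dpart_append)

lemma smooth_on_strip_Dth: "smooth_on_strip t0 t1 f \<Longrightarrow> smooth_on_strip t0 t1 (Dth f)"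
  using smooth_on_strip_dpart[of t0 t1 f "[False]"] by simp

lemma smooth_on_strip_Dt: "smooth_on_strip t0 t1 f \<Longrightarrow> smooth_on_strip t0 t1 (Dt t0 t1 f)"
  using smooth_on_strip_dpart[of t0 t1 f "[True]"] by simp

lemma has_vector_derivative_Dth:
  assumes "smooth_on_strip t0 t1 f" "t \<in> {t0..t1}"
  shows "((\<lambda>\<phi>. f t \<phi>) has_vector_derivative Dth f t \<theta>) (at \<theta>)"
  using assms unfolding smooth_on_strip_def
  by (metis Dth_def dpart.simps(1) vector_derivative_works)

lemma has_vector_derivative_Dt:
  assumes "smooth_on_strip t0 t1 f" "t \<in> {t0..t1}"
  shows "((\<lambda>s. f s \<theta>) has_vector_derivative Dt t0 t1 f t \<theta>) (at t within {t0..t1})"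
  using assms unfolding smooth_on_strip_def
  by (metis Dt_def dpart.simps(1) vector_derivative_works)

lemma continuous_on_strip:
  "smooth_on_strip t0 t1 f \<Longrightarrow> continuous_on ({t0..t1} \<times> UNIV) (\<lambda>(t, \<theta>). f t \<theta>)"
  unfolding smooth_on_strip_def by (metis dpart.simps(1))

lemma continuous_on_strip_time:
  assumes "smooth_on_strip t0 t1 f"
  shows "continuous_on {t0..t1} (\<lambda>s. f s \<theta>)"
proof -
  have "continuous_on {t0..t1} ((\<lambda>(t, \<theta>). f t \<theta>) \<circ> (\<lambda>s. (s, \<theta>)))"
    by (rule continuous_on_compose)
      (auto intro!: continuous_intros continuous_on_subset[OF continuous_on_strip[OF assms]])
  then show ?thesis by (simp add: o_def)
qed

lemma Dth_eqI: "((\<lambda>\<phi>. f t \<phi>) has_vector_derivative D) (at \<theta>) \<Longrightarrow> Dth f t \<theta> = D"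
  by (simp add: Dth_def vector_derivative_at)

lemma Dt_eqI:
  "t0 < t1 \<Longrightarrow> t \<in> {t0..t1} \<Longrightarrow> ((\<lambda>s. f s \<theta>) has_vector_derivative D) (at t within {t0..t1})
    \<Longrightarrow> Dt t0 t1 f t \<theta> = D"
  unfolding Dt_def using vector_derivative_within_cbox[of t0 t1 t] by simp

lemma eq_integral_Dt:
  fixes f :: "real \<Rightarrow> real \<Rightarrow> 'b::banach"
  assumes "smooth_on_strip t0 t1 f" "t \<in> {t0..t1}"
  shows "f t \<theta> = f t0 \<theta> + integral {t0..t} (\<lambda>s. Dt t0 t1 f s \<theta>)"
proof -
  have "((\<lambda>s. Dt t0 t1 f s \<theta>) has_integral f t \<theta> - f t0 \<theta>) {t0..t}"
  proof (rule fundamental_theorem_of_calculus)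
    fix s assume "s \<in> {t0..t}"
    with assms have "((\<lambda>s. f s \<theta>) has_vector_derivative Dt t0 t1 f s \<theta>) (at s within {t0..t1})"
      by (intro has_vector_derivative_Dt) auto
    then show "((\<lambda>s. f s \<theta>) has_vector_derivative Dt t0 t1 f s \<theta>) (at s within {t0..t})"
      by (rule has_vector_derivative_within_subset) (use assms in auto)
  qed (use assms in auto)
  then show ?thesis by (simp add: integral_unique)
qed

lemma Dth_eq_integral_Dth_Dt:
  fixes f :: "real \<Rightarrow> real \<Rightarrow> 'b::banach"
  assumes sm: "smooth_on_strip t0 t1 f" and t: "t \<in> {t0..t1}"
  shows "Dth f t \<theta> = Dth f t0 \<theta> + integral {t0..t} (\<lambda>s. Dth (Dt t0 t1 f) s \<theta>)"
proof -
  have t0: "t0 \<in> {t0..t1}" and sub: "cbox t0 t \<subseteq> {t0..t1}" using t by auto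
  have sm': "smooth_on_strip t0 t1 (Dth (Dt t0 t1 f))"
    by (intro smooth_on_strip_Dth smooth_on_strip_Dt sm)
  have "((\<lambda>\<phi>. integral (cbox t0 t) (\<lambda>s. Dt t0 t1 f s \<phi>)) has_vector_derivative
          integral (cbox t0 t) (\<lambda>s. Dth (Dt t0 t1 f) s \<theta>)) (at \<theta> within UNIV)"
  proof (rule leibniz_rule_vector_derivative)
    fix \<phi> s assume "s \<in> cbox t0 t"
    with sub show "((\<lambda>\<phi>. Dt t0 t1 f s \<phi>) has_vector_derivative Dth (Dt t0 t1 f) s \<phi>) (at \<phi> within UNIV)"
      using has_vector_derivative_Dth[OF smooth_on_strip_Dt[OF sm], of s] by auto
  next
    fix \<phi> :: real
    show "(\<lambda>s. Dt t0 t1 f s \<phi>) integrable_on cbox t0 t"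
      by (rule integrable_continuous)
        (rule continuous_on_subset[OF continuous_on_strip_time[OF smooth_on_strip_Dt[OF sm]] sub])
  next
    have "continuous_on (UNIV \<times> cbox t0 t) ((\<lambda>(s, \<phi>). Dth (Dt t0 t1 f) s \<phi>) \<circ> prod.swap)"
      by (rule continuous_on_compose[OF continuous_on_swap continuous_on_subset[OF continuous_on_strip[OF sm']]])
        (use sub in auto)
    then show "continuous_on (UNIV \<times> cbox t0 t) (\<lambda>(\<phi>, s). Dth (Dt t0 t1 f) s \<phi>)"
      by (simp add: o_def case_prod_beta)
  qed auto
  then have "((\<lambda>\<phi>. f t0 \<phi> + integral {t0..t} (\<lambda>s. Dt t0 t1 f s \<phi>)) has_vector_derivative
               Dth f t0 \<theta> + integral {t0..t} (\<lambda>s. Dth (Dt t0 t1 f) s \<theta>)) (at \<theta>)"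
    by (intro has_vector_derivative_add has_vector_derivative_Dth[OF sm t0]) simp
  moreover have "(\<lambda>\<phi>. f t0 \<phi> + integral {t0..t} (\<lambda>s. Dt t0 t1 f s \<phi>)) = (\<lambda>\<phi>. f t \<phi>)"
    using eq_integral_Dt[OF sm t] by simp
  ultimately show ?thesis by (simp add: Dth_eqI)
qed

lemma Dt_Dth_commute:
  fixes f :: "real \<Rightarrow> real \<Rightarrow> 'b::banach"
  assumes sm: "smooth_on_strip t0 t1 f" and "t0 < t1" and t: "t \<in> {t0..t1}"
  shows "Dt t0 t1 (Dth f) t \<theta> = Dth (Dt t0 t1 f) t \<theta>"
proof (rule Dt_eqI[OF \<open>t0 < t1\<close> t])
  have "continuous_on {t0..t1} (\<lambda>s. Dth (Dt t0 t1 f) s \<theta>)"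
    by (intro continuous_on_strip_time smooth_on_strip_Dth smooth_on_strip_Dt sm)
  then have "((\<lambda>s. Dth f t0 \<theta> + integral {t0..s} (\<lambda>s. Dth (Dt t0 t1 f) s \<theta>)) has_vector_derivative
               Dth (Dt t0 t1 f) t \<theta>) (at t within {t0..t1})"
    using integral_has_vector_derivative[OF _ t] by (auto intro!: derivative_eq_intros)
  moreover have "\<And>s. s \<in> {t0..t1} \<Longrightarrow>
      Dth f s \<theta> = Dth f t0 \<theta> + integral {t0..s} (\<lambda>s. Dth (Dt t0 t1 f) s \<theta>)"
    by (rule Dth_eq_integral_Dth_Dt[OF sm])
  ultimately show "((\<lambda>s. Dth f s \<theta>) has_vector_derivative Dth (Dt t0 t1 f) t \<theta>) (at t within {t0..t1})"
    by (rule has_vector_derivative_transform[OF t, rotated])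
qed

section \<open>Planar curves\<close>

lemma det2_self [simp]: "det2 u u = 0"
  by (simp add: det2_def)

lemma has_real_derivative_det2 [derivative_intros]:
  assumes "(p has_vector_derivative p') (at x within S)" "(q has_vector_derivative q') (at x within S)"
  shows "((\<lambda>x. det2 (p x) (q x)) has_real_derivative det2 p' (q x) + det2 (p x) q') (at x within S)"
  unfolding det2_def using assms
  by (auto intro!: derivative_eq_intros simp: algebra_simps)

lemma has_real_derivative_norm:
  fixes p :: "real \<Rightarrow> 'a::real_inner"
  assumes p: "(p has_vector_derivative p') (at x within S)" and nz: "p x \<noteq> 0"
  shows "((\<lambda>x. norm (p x)) has_real_derivative (p x \<bullet> p') / norm (p x)) (at x within S)"
proof -
  have "((\<lambda>x. norm (p x)) has_derivative (\<lambda>h. (h *\<^sub>R p') \<bullet> sgn (p x))) (at x within S)"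
    using has_derivative_compose[OF p[unfolded has_vector_derivative_def] has_derivative_norm[OF nz]] .
  moreover have "(\<lambda>h. (h *\<^sub>R p') \<bullet> sgn (p x)) = (*) ((p x \<bullet> p') / norm (p x))"
    by (auto simp: sgn_div_norm inner_commute field_simps)
  ultimately show ?thesis
    unfolding has_field_derivative_def by simp
qed

lemma has_real_derivative_curvature:
  fixes p q :: "real \<Rightarrow> complex"
  assumes p: "(p has_vector_derivative p') (at x within S)" and q: "(q has_vector_derivative q') (at x within S)"
    and nz: "p x \<noteq> 0"
  shows "((\<lambda>x. det2 (p x) (q x) / norm (p x) ^ 3) has_real_derivative
          (det2 p' (q x) + det2 (p x) q') / norm (p x) ^ 3
          - 3 * det2 (p x) (q x) * (p x \<bullet> p') / norm (p x) ^ 5) (at x within S)"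
  using nz
  by (auto intro!: derivative_eq_intros has_real_derivative_norm[OF p nz] p q
      simp: field_simps power_eq_if)

lemma has_vector_derivative_sgn_complex:
  fixes p :: "real \<Rightarrow> complex"
  assumes p: "(p has_vector_derivative p') (at x within S)" and nz: "p x \<noteq> 0"
  shows "((\<lambda>x. sgn (p x)) has_vector_derivative
          \<i> * of_real (det2 (p x) p' / (norm (p x))\<^sup>2) * sgn (p x)) (at x within S)"
proof -
  define z where "z = p x"
  define n where "n = complex_of_real (norm z)"
  have n: "n \<noteq> 0" "cnj z * z = n\<^sup>2"
    using nz complex_norm_square[of z] by (simp_all add: z_def n_def mult.commute)
  have "((\<lambda>x. inverse (norm (p x))) has_real_derivative
          - (inverse (norm z))\<^sup>2 * ((z \<bullet> p') / norm z)) (at x within S)"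
    using nz by (auto intro!: derivative_eq_intros has_real_derivative_norm[OF p nz]
        simp: z_def power2_eq_square)
  from has_vector_derivative_mult[OF has_vector_derivative_of_real[OF this] p]
  have "((\<lambda>x. sgn (p x)) has_vector_derivative
          of_real (inverse (norm z)) * p' - of_real ((z \<bullet> p') / norm z ^ 3) * z) (at x within S)"
    by (simp add: sgn_eq divide_inverse z_def power2_eq_square power3_eq_cube ac_simps)
  moreover have "\<i> * of_real (det2 z p' / (norm z)\<^sup>2) * sgn z + of_real ((z \<bullet> p') / norm z ^ 3) * z
      = of_real (inverse (norm z)) * p'"
  proof -
    have "\<i> * of_real (det2 z p' / (norm z)\<^sup>2) * sgn z + of_real ((z \<bullet> p') / norm z ^ 3) * z
        = (of_real (z \<bullet> p') + \<i> * of_real (det2 z p')) * z / n ^ 3"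
      using n by (simp add: n_def sgn_eq field_simps power2_eq_square power3_eq_cube)
    also have "of_real (z \<bullet> p') + \<i> * of_real (det2 z p') = cnj z * p'"
      by (simp add: complex_eq_iff inner_complex_def det2_def)
    also have "cnj z * p' * z / n ^ 3 = of_real (inverse (norm z)) * p'"
      using n by (simp add: n_def field_simps power2_eq_square power3_eq_cube)
    finally show ?thesis .
  qed
  ultimately show ?thesis
    unfolding z_def by (metis add_diff_cancel_right')
qed

lemma inner_mult_sgn_complex: "z \<bullet> (w * sgn z) = Re w * norm z"
proof (cases "z = 0")
  case False
  have "z \<bullet> (w * sgn z) = Re (cnj z * (w * sgn z))"
    by (simp add: inner_complex_def)
  also have "cnj z * (w * sgn z) = w * of_real (norm z)"
    using False by (simp add: sgn_eq field_simps flip: complex_norm_square) (simp add: power2_eq_square)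
  finally show ?thesis by simp
qed simp

section \<open>Horizontal paths of immersions\<close>

locale horizontal_path =
  fixes t0 t1 :: real and c :: "real \<Rightarrow> real \<Rightarrow> complex" and a :: "real \<Rightarrow> real \<Rightarrow> real"
  assumes interval: "t0 < t1"
    and smooth_c: "smooth_on_strip t0 t1 c"
    and smooth_a: "smooth_on_strip t0 t1 a"
    and immersion: "t \<in> {t0..t1} \<Longrightarrow> Dth c t \<theta> \<noteq> 0"
    and velocity: "t \<in> {t0..t1} \<Longrightarrow> Dt t0 t1 c t \<theta> = \<i> * of_real (a t \<theta>) * sgn (Dth c t \<theta>)"
begin

lemma has_vector_derivative_Dth_c:
  assumes "t \<in> {t0..t1}"
  shows "((\<lambda>\<phi>. Dth c t \<phi>) has_vector_derivative Dth (Dth c) t \<theta>) (at \<theta>)"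
    and "((\<lambda>\<phi>. Dth (Dth c) t \<phi>) has_vector_derivative Dth (Dth (Dth c)) t \<theta>) (at \<theta>)"
    and "((\<lambda>\<phi>. Dth (Dth (Dth c)) t \<phi>) has_vector_derivative Dth (Dth (Dth (Dth c))) t \<theta>) (at \<theta>)"
  using smooth_c smooth_on_strip_Dth
  by (blast intro: has_vector_derivative_Dth[OF _ assms])+

lemma has_real_derivative_Dth_a:
  assumes "t \<in> {t0..t1}"
  shows "((\<lambda>\<phi>. a t \<phi>) has_real_derivative Dth a t \<theta>) (at \<theta>)"
    and "((\<lambda>\<phi>. Dth a t \<phi>) has_real_derivative Dth (Dth a) t \<theta>) (at \<theta>)"
  unfolding has_real_derivative_iff_has_vector_derivative using smooth_a smooth_on_strip_Dth
  by (blast intro: has_vector_derivative_Dth[OF _ assms])+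

lemma Dth_curv:
  assumes t: "t \<in> {t0..t1}"
  shows "((\<lambda>\<phi>. curv c t \<phi>) has_real_derivative Dth (curv c) t \<theta>) (at \<theta>)"
    and "Dth (curv c) t \<theta> = det2 (Dth c t \<theta>) (Dth (Dth (Dth c)) t \<theta>) / norm (Dth c t \<theta>) ^ 3
            - 3 * curv c t \<theta> * (Dth c t \<theta> \<bullet> Dth (Dth c) t \<theta>) / norm (Dth c t \<theta>) ^ 2"
    (is "_ = ?\<kappa>'")
proof -
  have D: "((\<lambda>\<phi>. curv c t \<phi>) has_real_derivative ?\<kappa>') (at \<theta>)"
    using has_real_derivative_curvature[OF has_vector_derivative_Dth_c(1,2)[OF t] immersion[OF t]]
    unfolding curv_def by (simp add: power_eq_if field_simps immersion[OF t])
  then show "Dth (curv c) t \<theta> = ?\<kappa>'"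
    by (intro Dth_eqI) (simp add: has_real_derivative_iff_has_vector_derivative)
  with D show "((\<lambda>\<phi>. curv c t \<phi>) has_real_derivative Dth (curv c) t \<theta>) (at \<theta>)"
    by simp
qed

lemma Dth_curv_differentiable:
  assumes t: "t \<in> {t0..t1}"
  shows "(\<lambda>\<phi>. Dth (curv c) t \<phi>) differentiable (at \<theta>)"
proof -
  note P = has_vector_derivative_Dth_c(1)[OF t] and Q = has_vector_derivative_Dth_c(2)[OF t]
    and R = has_vector_derivative_Dth_c(3)[OF t] and nz = immersion[OF t]
  have "(\<lambda>\<phi>. det2 (Dth c t \<phi>) (Dth (Dth (Dth c)) t \<phi>) / norm (Dth c t \<phi>) ^ 3) differentiable (at \<theta>)"
    using has_real_derivative_curvature[OF P R nz] real_differentiable_def by blast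
  moreover have "(\<lambda>\<phi>. curv c t \<phi>) differentiable (at \<theta>)"
    using Dth_curv(1)[OF t] real_differentiable_def by blast
  moreover have "(\<lambda>\<phi>. norm (Dth c t \<phi>)) differentiable (at \<theta>)"
    using has_real_derivative_norm[OF P nz] real_differentiable_def by blast
  moreover have "(\<lambda>\<phi>. Dth c t \<phi> \<bullet> Dth (Dth c) t \<phi>) differentiable (at \<theta>)"
    using P Q by (intro differentiable_inner differentiableI_vector)
  ultimately show ?thesis
    unfolding Dth_curv(2)[OF t, abs_def] using nz by (auto intro!: derivative_intros)
qed

lemma curv_differentiable_time:
  assumes t: "t \<in> {t0..t1}"
  shows "(\<lambda>s. curv c s \<theta>) differentiable (at t within {t0..t1})"
  using has_real_derivative_curvature[OF has_vector_derivative_Dt[OF smooth_on_strip_Dth[OF smooth_c] t]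
      has_vector_derivative_Dt[OF smooth_on_strip_Dth[OF smooth_on_strip_Dth[OF smooth_c]] t] immersion[OF t]]
  unfolding curv_def real_differentiable_def by blast

lemma Dth_tangent:
  assumes t: "t \<in> {t0..t1}"
  shows "((\<lambda>\<phi>. sgn (Dth c t \<phi>)) has_vector_derivative
           \<i> * of_real (curv c t \<theta> * norm (Dth c t \<theta>)) * sgn (Dth c t \<theta>)) (at \<theta>)"
  using has_vector_derivative_sgn_complex[OF has_vector_derivative_Dth_c(1)[OF t] immersion[OF t]]
  by (simp add: curv_def power2_eq_square power3_eq_cube immersion[OF t])

lemma Dt_Dth_c:
  assumes t: "t \<in> {t0..t1}"
  shows "Dt t0 t1 (Dth c) t \<theta>
       = (\<i> * of_real (Dth a t \<theta>) - of_real (a t \<theta> * curv c t \<theta> * norm (Dth c t \<theta>))) * sgn (Dth c t \<theta>)"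
proof -
  have "((\<lambda>\<phi>. \<i> * of_real (a t \<phi>) * sgn (Dth c t \<phi>)) has_vector_derivative
          \<i> * of_real (a t \<theta>) * (\<i> * of_real (curv c t \<theta> * norm (Dth c t \<theta>)) * sgn (Dth c t \<theta>))
          + \<i> * of_real (Dth a t \<theta>) * sgn (Dth c t \<theta>)) (at \<theta>)"
    by (intro has_vector_derivative_mult has_vector_derivative_mult_right has_vector_derivative_of_real
        has_real_derivative_Dth_a(1)[OF t] Dth_tangent[OF t])
  then have "Dth (Dt t0 t1 c) t \<theta>
       = (\<i> * of_real (Dth a t \<theta>) - of_real (a t \<theta> * curv c t \<theta> * norm (Dth c t \<theta>))) * sgn (Dth c t \<theta>)"
    by (intro Dth_eqI) (simp add: velocity[OF t] algebra_simps)
  then show ?thesis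
    by (simp add: Dt_Dth_commute[OF smooth_c interval t])
qed

lemma Dt_speed:
  assumes t: "t \<in> {t0..t1}"
  shows "Dt t0 t1 (\<lambda>t \<theta>. norm (Dth c t \<theta>)) t \<theta> = - a t \<theta> * curv c t \<theta> * norm (Dth c t \<theta>)"
proof (rule Dt_eqI[OF interval t])
  have "((\<lambda>s. norm (Dth c s \<theta>)) has_real_derivative
          (Dth c t \<theta> \<bullet> Dt t0 t1 (Dth c) t \<theta>) / norm (Dth c t \<theta>)) (at t within {t0..t1})"
    by (rule has_real_derivative_norm[OF has_vector_derivative_Dt[OF smooth_on_strip_Dth[OF smooth_c] t]
          immersion[OF t]])
  then show "((\<lambda>s. norm (Dth c s \<theta>)) has_vector_derivative
          - a t \<theta> * curv c t \<theta> * norm (Dth c t \<theta>)) (at t within {t0..t1})"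
    using immersion[OF t]
    by (simp add: Dt_Dth_c[OF t] inner_mult_sgn_complex has_real_derivative_iff_has_vector_derivative)
qed

lemma has_real_derivative_curv_a2:
  assumes t: "t \<in> {t0..t1}"
  shows "((\<lambda>\<phi>. curv c t \<phi> * a t \<phi> ^ 2) has_real_derivative
           Dth (curv c) t \<theta> * a t \<theta> ^ 2 + 2 * curv c t \<theta> * a t \<theta> * Dth a t \<theta>) (at \<theta>)"
  by (auto intro!: derivative_eq_intros Dth_curv(1)[OF t] has_real_derivative_Dth_a(1)[OF t])

lemma Ds_curv_a2_differentiable:
  assumes t: "t \<in> {t0..t1}"
  shows "(\<lambda>\<phi>. Ds c (\<lambda>t \<theta>. curv c t \<theta> * a t \<theta> ^ 2) t \<phi>) differentiable (at \<theta>)"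
proof -
  have "Ds c (\<lambda>t \<theta>. curv c t \<theta> * a t \<theta> ^ 2) t \<phi>
      = (Dth (curv c) t \<phi> * a t \<phi> ^ 2 + 2 * curv c t \<phi> * a t \<phi> * Dth a t \<phi>) / norm (Dth c t \<phi>)" for \<phi>
    using has_real_derivative_curv_a2[OF t]
    by (simp add: Ds_def Dth_eqI has_real_derivative_iff_has_vector_derivative)
  moreover have "(\<lambda>\<phi>. curv c t \<phi>) differentiable (at \<theta>)"
    using Dth_curv(1)[OF t] real_differentiable_def by blast
  moreover have "(\<lambda>\<phi>. a t \<phi>) differentiable (at \<theta>)" "(\<lambda>\<phi>. Dth a t \<phi>) differentiable (at \<theta>)"
    using has_real_derivative_Dth_a[OF t] real_differentiable_def by blast+
  moreover have "(\<lambda>\<phi>. norm (Dth c t \<phi>)) differentiable (at \<theta>)"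
    using has_real_derivative_norm[OF has_vector_derivative_Dth_c(1)[OF t] immersion[OF t]]
      real_differentiable_def by blast
  ultimately show ?thesis
    using Dth_curv_differentiable[OF t] immersion[OF t] by (auto intro!: derivative_intros)
qed

lemma Dt_momentum:
  assumes t: "t \<in> {t0..t1}"
  shows "Dt t0 t1 (\<lambda>t \<theta>. complex_of_real ((1 + A * curv c t \<theta> ^ 2) * norm (Dth c t \<theta>)) * Dt t0 t1 c t \<theta>) t \<theta>
       = (of_real (- (1 + A * curv c t \<theta> ^ 2) * a t \<theta> * Dth a t \<theta>)
          + \<i> * of_real (norm (Dth c t \<theta>) * (Dt t0 t1 (\<lambda>t \<theta>. (1 + A * curv c t \<theta> ^ 2) * a t \<theta>) t \<theta>
                                  - (1 + A * curv c t \<theta> ^ 2) * a t \<theta> ^ 2 * curv c t \<theta>))) * sgn (Dth c t \<theta>)"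
    (is "_ = (?x + \<i> * of_real (?V * (?B' - ?y))) * ?T")
proof -
  define B where "B = (\<lambda>s. (1 + A * curv c s \<theta> ^ 2) * a s \<theta>)"
  have "B differentiable (at t within {t0..t1})"
    unfolding B_def using curv_differentiable_time[OF t]
      differentiableI_vector[OF has_vector_derivative_Dt[OF smooth_a t]]
    by (auto intro!: derivative_intros)
  then have "(B has_real_derivative ?B') (at t within {t0..t1})"
    by (simp add: B_def Dt_def vector_derivative_works has_real_derivative_iff_has_vector_derivative)
  from has_vector_derivative_mult[OF has_vector_derivative_mult_right[OF has_vector_derivative_of_real[OF this]]
      has_vector_derivative_Dt[OF smooth_on_strip_Dth[OF smooth_c] t]]
  have "((\<lambda>s. \<i> * of_real (B s) * Dth c s \<theta>) has_vector_derivative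
          \<i> * of_real (B t) * Dt t0 t1 (Dth c) t \<theta> + \<i> * of_real ?B' * Dth c t \<theta>) (at t within {t0..t1})"
    by (simp add: mult.assoc)
  moreover have "of_real ((1 + A * curv c s \<theta> ^ 2) * norm (Dth c s \<theta>)) * Dt t0 t1 c s \<theta>
      = \<i> * of_real (B s) * Dth c s \<theta>" if "s \<in> {t0..t1}" for s
    using immersion[OF that] by (simp add: B_def velocity[OF that] sgn_eq)
  ultimately have "Dt t0 t1 (\<lambda>t \<theta>. complex_of_real ((1 + A * curv c t \<theta> ^ 2) * norm (Dth c t \<theta>)) * Dt t0 t1 c t \<theta>) t \<theta>
      = \<i> * of_real (B t) * Dt t0 t1 (Dth c) t \<theta> + \<i> * of_real ?B' * Dth c t \<theta>"
    by (intro Dt_eqI[OF interval t]) (rule has_vector_derivative_transform[OF t, rotated])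
  also have "\<dots> = (?x + \<i> * of_real (?V * (?B' - ?y))) * ?T"
    using immersion[OF t]
    by (simp add: Dt_Dth_c[OF t] B_def complex_eq_iff field_simps power2_eq_square)
  finally show ?thesis .
qed

lemma Dth_geodesic_rhs:
  assumes t: "t \<in> {t0..t1}"
  shows "Dth (\<lambda>t \<theta>.
            complex_of_real ((-1 + A * curv c t \<theta> ^ 2) / 2 * norm (Dt t0 t1 c t \<theta>) ^ 2 / norm (Dth c t \<theta>)) * Dth c t \<theta>
          + complex_of_real (A * Dth (\<lambda>t \<theta>. curv c t \<theta> * norm (Dt t0 t1 c t \<theta>) ^ 2) t \<theta> / norm (Dth c t \<theta>) ^ 2)
              * \<i> * Dth c t \<theta>) t \<theta>
       = (of_real (- (1 + A * curv c t \<theta> ^ 2) * a t \<theta> * Dth a t \<theta>)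
          + \<i> * of_real (A * Dth (Ds c (\<lambda>t \<theta>. curv c t \<theta> * a t \<theta> ^ 2)) t \<theta>
                          + (-1 + A * curv c t \<theta> ^ 2) / 2 * a t \<theta> ^ 2 * curv c t \<theta> * norm (Dth c t \<theta>)))
         * sgn (Dth c t \<theta>)"
    (is "Dth ?F t \<theta> = _")
proof -
  define g where "g = (\<lambda>\<phi>. (-1 + A * curv c t \<phi> ^ 2) / 2 * a t \<phi> ^ 2)"
  define h where "h = (\<lambda>\<phi>. A * Ds c (\<lambda>t \<theta>. curv c t \<theta> * a t \<theta> ^ 2) t \<phi>)"
  have speed: "norm (Dt t0 t1 c t \<phi>) ^ 2 = a t \<phi> ^ 2" for \<phi>
    using immersion[OF t] by (simp add: velocity[OF t] norm_mult norm_sgn)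
  then have Dth_speed: "Dth (\<lambda>t \<theta>. curv c t \<theta> * norm (Dt t0 t1 c t \<theta>) ^ 2) t \<phi>
      = Dth (\<lambda>t \<theta>. curv c t \<theta> * a t \<theta> ^ 2) t \<phi>" for \<phi>
    by (simp add: Dth_def)
  have Dth_curv_a2: "Dth (\<lambda>t \<theta>. curv c t \<theta> * a t \<theta> ^ 2) t \<phi>
      = Dth (curv c) t \<phi> * a t \<phi> ^ 2 + 2 * curv c t \<phi> * a t \<phi> * Dth a t \<phi>" for \<phi>
    using has_real_derivative_curv_a2[OF t]
    by (simp add: Dth_eqI has_real_derivative_iff_has_vector_derivative)
  have "(g has_real_derivative
          A * curv c t \<theta> * Dth (curv c) t \<theta> * a t \<theta> ^ 2 + (-1 + A * curv c t \<theta> ^ 2) * a t \<theta> * Dth a t \<theta>) (at \<theta>)"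
    unfolding g_def
    by (auto intro!: derivative_eq_intros Dth_curv(1)[OF t] has_real_derivative_Dth_a(1)[OF t]
        simp: field_simps)
  moreover have "(h has_real_derivative A * Dth (Ds c (\<lambda>t \<theta>. curv c t \<theta> * a t \<theta> ^ 2)) t \<theta>) (at \<theta>)"
    using Ds_curv_a2_differentiable[OF t]
    by (auto intro!: derivative_eq_intros simp: h_def Dth_def vector_derivative_works
        has_real_derivative_iff_has_vector_derivative)
  ultimately have dF: "((\<lambda>\<phi>. (of_real (g \<phi>) + \<i> * of_real (h \<phi>)) * sgn (Dth c t \<phi>)) has_vector_derivative
          (of_real (g \<theta>) + \<i> * of_real (h \<theta>)) * (\<i> * of_real (curv c t \<theta> * norm (Dth c t \<theta>)) * sgn (Dth c t \<theta>))
          + (of_real (A * curv c t \<theta> * Dth (curv c) t \<theta> * a t \<theta> ^ 2 + (-1 + A * curv c t \<theta> ^ 2) * a t \<theta> * Dth a t \<theta>)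
             + \<i> * of_real (A * Dth (Ds c (\<lambda>t \<theta>. curv c t \<theta> * a t \<theta> ^ 2)) t \<theta>)) * sgn (Dth c t \<theta>)) (at \<theta>)"
    by (intro has_vector_derivative_mult has_vector_derivative_add has_vector_derivative_mult_right
        has_vector_derivative_of_real Dth_tangent[OF t])
  have F: "(\<lambda>\<phi>. ?F t \<phi>) = (\<lambda>\<phi>. (of_real (g \<phi>) + \<i> * of_real (h \<phi>)) * sgn (Dth c t \<phi>))"
    unfolding Dth_speed speed using immersion[OF t]
    by (auto simp: g_def h_def Ds_def sgn_eq field_simps power2_eq_square)
  show ?thesis
    unfolding Dth_eqI[where f = ?F, OF dF[folded F]] g_def h_def Ds_def Dth_curv_a2
    using immersion[OF t] by (simp add: complex_eq_iff field_simps power2_eq_square)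
qed

lemma geodesic_equation_iff:
  assumes t: "t \<in> {t0..t1}"
  shows "Dt t0 t1 (\<lambda>t \<theta>. complex_of_real ((1 + A * curv c t \<theta> ^ 2) * norm (Dth c t \<theta>)) * Dt t0 t1 c t \<theta>) t \<theta>
           = Dth (\<lambda>t \<theta>.
                 complex_of_real ((-1 + A * curv c t \<theta> ^ 2) / 2 * norm (Dt t0 t1 c t \<theta>) ^ 2 / norm (Dth c t \<theta>)) * Dth c t \<theta>
               + complex_of_real (A * Dth (\<lambda>t \<theta>. curv c t \<theta> * norm (Dt t0 t1 c t \<theta>) ^ 2) t \<theta> / norm (Dth c t \<theta>) ^ 2)
                   * \<i> * Dth c t \<theta>) t \<theta>
         \<longleftrightarrow>
           Dt t0 t1 (\<lambda>t \<theta>. (1 + A * curv c t \<theta> ^ 2) * a t \<theta>) t \<theta>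
           = (1 + 3 * A * curv c t \<theta> ^ 2) / 2 * curv c t \<theta> * a t \<theta> ^ 2
             + A * Ds c (Ds c (\<lambda>t \<theta>. curv c t \<theta> * a t \<theta> ^ 2)) t \<theta>"
proof -
  have T: "sgn (Dth c t \<theta>) \<noteq> 0" and "norm (Dth c t \<theta>) \<noteq> 0"
    using immersion[OF t] by (simp_all add: sgn_zero_iff)
  then show ?thesis
    unfolding Dt_momentum[OF t] Dth_geodesic_rhs[OF t] Ds_def[of c "Ds c _"] mult_right_cancel[OF T]
    by (simp add: complex_eq_iff field_simps)
qed

end

theorem mainTheorem16:
  fixes A t0 t1 :: real and c :: "real \<Rightarrow> real \<Rightarrow> complex" and a :: "real \<Rightarrow> real \<Rightarrow> real"
  assumes A: "A \<ge> 0"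
    and int: "t0 < t1"
    and smooth_c: "smooth_on_strip t0 t1 c"
    and per_c: "periodic_theta c"
    and immersion: "\<forall>t\<in>{t0..t1}. \<forall>\<theta>. Dth c t \<theta> \<noteq> 0"
    and horizontal: "\<forall>t\<in>{t0..t1}. \<forall>\<theta>. Dt t0 t1 c t \<theta> \<bullet> Dth c t \<theta> = 0"
    and smooth_a: "smooth_on_strip t0 t1 a"
    and a_def: "\<forall>t\<in>{t0..t1}. \<forall>\<theta>.
                  Dt t0 t1 c t \<theta> = complex_of_real (a t \<theta>) * \<i> * Dth c t \<theta> / complex_of_real (norm (Dth c t \<theta>))"
  shows "((\<forall>t\<in>{t0..t1}. \<forall>\<theta>.
             Dt t0 t1 (\<lambda>t \<theta>. complex_of_real ((1 + A * curv c t \<theta> ^ 2) * norm (Dth c t \<theta>)) * Dt t0 t1 c t \<theta>) t \<theta>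
           = Dth (\<lambda>t \<theta>.
                 complex_of_real ((-1 + A * curv c t \<theta> ^ 2) / 2 * norm (Dt t0 t1 c t \<theta>) ^ 2 / norm (Dth c t \<theta>)) * Dth c t \<theta>
               + complex_of_real (A * Dth (\<lambda>t \<theta>. curv c t \<theta> * norm (Dt t0 t1 c t \<theta>) ^ 2) t \<theta> / norm (Dth c t \<theta>) ^ 2)
                   * \<i> * Dth c t \<theta>) t \<theta>)
         \<longleftrightarrow>
         (\<forall>t\<in>{t0..t1}. \<forall>\<theta>.
             Dt t0 t1 (\<lambda>t \<theta>. (1 + A * curv c t \<theta> ^ 2) * a t \<theta>) t \<theta>
           = (1 + 3 * A * curv c t \<theta> ^ 2) / 2 * curv c t \<theta> * a t \<theta> ^ 2
             + A * Ds c (Ds c (\<lambda>t \<theta>. curv c t \<theta> * a t \<theta> ^ 2)) t \<theta>))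
       \<and> (\<forall>t\<in>{t0..t1}. \<forall>\<theta>.
             Dt t0 t1 (\<lambda>t \<theta>. norm (Dth c t \<theta>)) t \<theta> = - a t \<theta> * curv c t \<theta> * norm (Dth c t \<theta>))"
proof -
  interpret horizontal_path t0 t1 c a
  proof
    fix t \<theta> assume "t \<in> {t0..t1}"
    then show "Dth c t \<theta> \<noteq> 0" and "Dt t0 t1 c t \<theta> = \<i> * of_real (a t \<theta>) * sgn (Dth c t \<theta>)"
      using immersion a_def by (auto simp: sgn_eq)
  qed (fact int smooth_c smooth_a)+
  show ?thesis
    using geodesic_equation_iff Dt_speed by simp
qed

end
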